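(* In the Coxeter arrangement of type $B_n$ ($n\ge1$): for $0\le i<j\le n$ the hyperplane $H_{i,j}$ has exactly $2^{j-i-1}$ shards; for $1\le i<j\le n$ the hyperplane $H_{i,-j}$ has exactly $2^{j-i}3^{i-1}$ shards. Consequently the arrangement has $\sum_{0\le i<j\le n}2^{j-i-1}+\sum_{1\le i<j\le n}2^{j-i}3^{i-1}=3^n-n-1$ shards in total.
   Context: Shards. Let $V$ be a real Euclidean space with inner product $\langle\cdot,\cdot\rangle$, $\Phi\subset V$ a finite root system with a chosen set of positive roots $\Phi^+$, and $\mathcal A=\{H_\beta:\beta\in\Phi^+\}$ with $H_\beta=\{\lambda\in V:\langle\lambda,\beta\rangle=0\}$ (the Coxeter arrangement). The base region is $B=\{\lambda\in V:\langle\lambda,\beta\rangle>0\text{ for all }\beta\in\Phi^+\}$. For distinct $H,H'\in\mathcal A$ let $\mathcal A(H,H')$ be the set of hyperplanes of $\mathcal A$ containing $H\cap H'$ (a rank two subarrangement). Exactly one connected component $B'$ of $V\setminus\bigcup\mathcal A(H,H')$ contains $B$, and exactly two hyperplanes of $\mathcal A(H,H')$ contain facets of the closure of $B'$; these are the basic hyperplanes of $\mathcal A(H,H')$. Each non-basic $H''\in\mathcal A(H,H')$ is said to be cut by each of the two basic hyperplanes of $\mathcal A(H,H')$. For $H\in\mathcal A$ let $L_H$ be the set of hyperplanes of $\mathcal A$ that cut $H$ in some rank two subarrangement; the shards of $H$ are the closures of the connected components of $H\setminus\bigcup_{H_\gamma\in L_H}(H\cap H_\gamma)$. A shard of $\mathcal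 A$ is a shard of some $H\in\mathcal A$. Type $B_n$: $V=\mathbb R^n$ with the standard inner product, $\Phi^+=\{\varepsilon_j\pm\varepsilon_i:1\le i<j\le n\}\cup\{\varepsilon_i:1\le i\le n\}$, base region $B=\{0<x_1<\cdots<x_n\}$. The hyperplanes are $H_{i,j}=\{x_i=x_j\}$ ($1\le i<j\le n$, root $\varepsilon_j-\varepsilon_i$), $H_{0,j}=\{x_j=0\}$ ($1\le j\le n$, root $\varepsilon_j$), and $H_{i,-j}=\{x_i=-x_j\}$ ($1\le i<j\le n$, root $\varepsilon_j+\varepsilon_i$). *)

theory Defs
  imports "HOL-Analysis.Analysis"
begin

text \<open>The ambient space V is the whole Euclidean space 'a; the arrangement is
given by a set P of positive roots.\<close>

definition root_hyp :: "'a::euclidean_space \<Rightarrow> 'a set" where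
  "root_hyp \<beta> = {x. inner x \<beta> = 0}"

definition arrangement :: "'a::euclidean_space set \<Rightarrow> 'a set set" where
  "arrangement P = root_hyp ` P"

definition base_region :: "'a::euclidean_space set \<Rightarrow> 'a set" where
  "base_region P = {x. \<forall>\<beta>\<in>P. inner x \<beta> > 0}"

definition rank2_sub :: "'a set set \<Rightarrow> 'a set \<Rightarrow> 'a set \<Rightarrow> 'a set set" where
  "rank2_sub A H H' = {H''\<in>A. H \<inter> H' \<subseteq> H''}"

definition base_chamber :: "'a::euclidean_space set set \<Rightarrow> 'a set \<Rightarrow> 'a set \<Rightarrow> 'a set \<Rightarrow> 'a set" where
  "base_chamber A B H H' =
     (THE C. C \<in> components (- \<Union>(rank2_sub A H H')) \<and> B \<subseteq> C)"

definition is_basic :: "'a::euclidean_space set set \<Rightarrow> 'a set \<Rightarrow> 'a set \<Rightarrow> 'a set \<Rightarrow> 'a set \<Rightarrow> bool" where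
  "is_basic A B H H' G \<longleftrightarrow> G \<in> rank2_sub A H H' \<and>
     (\<exists>F. F facet_of closure (base_chamber A B H H') \<and> F \<subseteq> G)"

definition cuts :: "'a::euclidean_space set set \<Rightarrow> 'a set \<Rightarrow> 'a set \<Rightarrow> 'a set \<Rightarrow> bool" where
  "cuts A B G H \<longleftrightarrow> (\<exists>H1 H2. H1 \<in> A \<and> H2 \<in> A \<and> H1 \<noteq> H2 \<and>
     H \<in> rank2_sub A H1 H2 \<and> \<not> is_basic A B H1 H2 H \<and> is_basic A B H1 H2 G)"

definition cutting_set :: "'a::euclidean_space set set \<Rightarrow> 'a set \<Rightarrow> 'a set \<Rightarrow> 'a set set" where
  "cutting_set A B H = {G\<in>A. cuts A B G H}"

definition shards_of :: "'a::euclidean_space set set \<Rightarrow> 'a set \<Rightarrow> 'a set \<Rightarrow> 'a set set" where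
  "shards_of A B H =
     closure ` components (H - \<Union>{H \<inter> G | G. G \<in> cutting_set A B H})"

definition all_shards :: "'a::euclidean_space set set \<Rightarrow> 'a set \<Rightarrow> 'a set set" where
  "all_shards A B = (\<Union>H\<in>A. shards_of A B H)"

text \<open>Coordinates of real^n are labelled 1..n via a bijection \<sigma>;
x_i is x $ \<sigma> i, and eps \<sigma> i is the standard basis vector for coordinate i.\<close>

definition eps :: "(nat \<Rightarrow> 'n::finite) \<Rightarrow> nat \<Rightarrow> real^'n" where
  "eps \<sigma> i = axis (\<sigma> i) 1"

definition posroots_B :: "(nat \<Rightarrow> 'n::finite) \<Rightarrow> nat \<Rightarrow> (real^'n) set" where
  "posroots_B \<sigma> n =
     {eps \<sigma> j - eps \<sigma> i | i j. 1 \<le> i \<and> i < j \<and> j \<le> n}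
   \<union> {eps \<sigma> j + eps \<sigma> i | i j. 1 \<le> i \<and> i < j \<and> j \<le> n}
   \<union> {eps \<sigma> i | i. 1 \<le> i \<and> i \<le> n}"

definition hypB :: "(nat \<Rightarrow> 'n::finite) \<Rightarrow> nat \<Rightarrow> nat \<Rightarrow> (real^'n) set" where
  "hypB \<sigma> i j = (if i = 0 then {x. x $ \<sigma> j = 0} else {x. x $ \<sigma> i = x $ \<sigma> j})"

definition hypB_neg :: "(nat \<Rightarrow> 'n::finite) \<Rightarrow> nat \<Rightarrow> nat \<Rightarrow> (real^'n) set" where
  "hypB_neg \<sigma> i j = {x. x $ \<sigma> i = - (x $ \<sigma> j)}"

end

theory Submission
  imports Defs
begin

text \<open>
  Whether H_\<beta> is cut in the rank two
  subarrangement through H_\<beta> \<inter> H_\<alpha> is decided by two linear criteria: H_\<beta> is not basic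
  there if \<beta> is a positive combination of two other roots of it, and H_\<alpha> is basic as soon as
  some point of H_\<alpha> is strictly positive on all remaining roots. Exhibiting such points for
  type B_n gives the cut loci explicitly: H_{0,j} is cut along x_k = 0 (k < j), H_{i,j} along
  x_k = x_i (i < k < j), and H_{i,-j} along x_i = 0, x_k = x_j (k < j, k \<noteq> i) and x_k = x_i
  (k < i). The complement of finitely many hyperplanes in H has the nonempty sign cells as its
  components, and these are counted directly; on H_{i,-j} the relation x_j = - x_i leaves only
  three admissible positions of x_k relative to x_i and x_j for each k < i. Shards of distinct
  hyperplanes are distinct because a shard spans its hyperplane, so the counts add up.
\<close>

definition vanishing_roots :: "'a::euclidean_space set \<Rightarrow> 'a set \<Rightarrow> 'a set" where
  "vanishing_roots P X = {\<gamma>\<in>P. X \<subseteq> root_hyp \<gamma>}"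

definition cut_locus :: "'a::euclidean_space set set \<Rightarrow> 'a set \<Rightarrow> 'a set \<Rightarrow> 'a set" where
  "cut_locus A B H = \<Union>{H \<inter> G | G. G \<in> cutting_set A B H}"

lemma cut_locus_subset_hyperplane: "cut_locus A B H \<subseteq> H"
  by (auto simp: cut_locus_def)

lemma shards_of_eq_cut_locus: "shards_of A B H = closure ` components (H - cut_locus A B H)"
  by (simp add: shards_of_def cut_locus_def)

lemma root_hyp_eq: "root_hyp \<beta> = {x. \<beta> \<bullet> x = 0}"
  by (auto simp: root_hyp_def inner_commute)

lemma subspace_root_hyp: "subspace (root_hyp \<beta>)"
  by (simp add: root_hyp_eq subspace_hyperplane)

lemma convex_root_hyp: "convex (root_hyp \<beta>)"
  by (simp add: root_hyp_eq convex_hyperplane)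

lemma closed_root_hyp: "closed (root_hyp \<beta>)"
  by (simp add: root_hyp_eq closed_hyperplane)

lemma rank2_sub_arrangement:
  "rank2_sub (arrangement P) H1 H2 = root_hyp ` vanishing_roots P (H1 \<inter> H2)"
  by (auto simp: rank2_sub_def arrangement_def vanishing_roots_def)

lemma convex_open_cone: "convex {x. \<forall>\<gamma>\<in>Q. 0 < x \<bullet> \<gamma>}"
proof -
  have "{x. \<forall>\<gamma>\<in>Q. 0 < x \<bullet> \<gamma>} = (\<Inter>\<gamma>\<in>Q. {x. \<gamma> \<bullet> x > 0})"
    by (auto simp: inner_commute)
  then show ?thesis
    by (auto intro!: convex_INT convex_halfspace_gt)
qed

lemma open_open_cone: "finite Q \<Longrightarrow> open {x. \<forall>\<gamma>\<in>Q. 0 < x \<bullet> \<gamma>}"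
proof -
  have "{x. \<forall>\<gamma>\<in>Q. 0 < x \<bullet> \<gamma>} = (\<Inter>\<gamma>\<in>Q. {x. \<gamma> \<bullet> x > 0})"
    by (auto simp: inner_commute)
  then show "finite Q \<Longrightarrow> ?thesis"
    by (auto intro!: open_INT open_halfspace_gt)
qed

lemma open_cone_in_components:
  fixes Q :: "'a::euclidean_space set"
  assumes b: "b \<in> {x. \<forall>\<gamma>\<in>Q. 0 < x \<bullet> \<gamma>}"
  shows "{x. \<forall>\<gamma>\<in>Q. 0 < x \<bullet> \<gamma>} \<in> components {x. \<forall>\<gamma>\<in>Q. x \<bullet> \<gamma> \<noteq> 0}"
  unfolding in_components_maximal
proof (intro conjI allI impI)
  show "{x. \<forall>\<gamma>\<in>Q. 0 < x \<bullet> \<gamma>} \<noteq> {}" "{x. \<forall>\<gamma>\<in>Q. 0 < x \<bullet> \<gamma>} \<subseteq> {x. \<forall>\<gamma>\<in>Q. x \<bullet> \<gamma> \<noteq> 0}"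
    using b by force+
  show "connected {x. \<forall>\<gamma>\<in>Q. 0 < x \<bullet> \<gamma>}"
    by (rule convex_connected[OF convex_open_cone])
  fix D assume D: "D \<noteq> {} \<and> {x. \<forall>\<gamma>\<in>Q. 0 < x \<bullet> \<gamma>} \<subseteq> D \<and> D \<subseteq> {x. \<forall>\<gamma>\<in>Q. x \<bullet> \<gamma> \<noteq> 0} \<and> connected D"
  then have "b \<in> D"
    using b by blast
  have "x \<bullet> \<gamma> > 0" if x: "x \<in> D" and \<gamma>: "\<gamma> \<in> Q" for x \<gamma>
  proof (rule ccontr)
    assume "\<not> x \<bullet> \<gamma> > 0"
    then have "\<gamma> \<bullet> x \<le> 0"
      by (simp add: inner_commute)
    moreover have "0 \<le> \<gamma> \<bullet> b"
      using b \<gamma> by (auto simp: inner_commute less_imp_le)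
    ultimately obtain z where "z \<in> D" "\<gamma> \<bullet> z = 0"
      using connected_ivt_hyperplane[of D x b \<gamma> 0] D x \<open>b \<in> D\<close> by blast
    then show False
      using D \<gamma> by (auto simp: inner_commute)
  qed
  then show "D = {x. \<forall>\<gamma>\<in>Q. 0 < x \<bullet> \<gamma>}"
    using D by blast
qed

lemma base_chamber_eq:
  assumes b: "b \<in> base_region P"
  shows "base_chamber (arrangement P) (base_region P) H1 H2
           = {x. \<forall>\<gamma>\<in>vanishing_roots P (H1 \<inter> H2). 0 < x \<bullet> \<gamma>}"
    (is "_ = ?C")
proof -
  have S: "- \<Union>(rank2_sub (arrangement P) H1 H2) = {x. \<forall>\<gamma>\<in>vanishing_roots P (H1 \<inter> H2). x \<bullet> \<gamma> \<noteq> 0}"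
    by (auto simp: rank2_sub_arrangement root_hyp_def)
  have "base_region P \<subseteq> ?C"
    by (auto simp: base_region_def vanishing_roots_def)
  moreover from this have "?C \<in> components (- \<Union>(rank2_sub (arrangement P) H1 H2))"
    unfolding S using b by (intro open_cone_in_components) blast
  ultimately show ?thesis
    unfolding base_chamber_def using b components_eq by (intro the_equality) blast+
qed

lemma closure_base_chamber_eq:
  assumes b: "b \<in> base_region P"
  shows "closure (base_chamber (arrangement P) (base_region P) H1 H2)
           = {x. \<forall>\<gamma>\<in>vanishing_roots P (H1 \<inter> H2). 0 \<le> x \<bullet> \<gamma>}"
    (is "closure ?C = ?K")
proof
  have "?K = (\<Inter>\<gamma>\<in>vanishing_roots P (H1 \<inter> H2). {x. x \<bullet> \<gamma> \<ge> 0})"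
    by auto
  then have "closed ?K"
    by (auto intro!: closed_INT closed_Collect_le continuous_intros)
  then show "closure ?C \<subseteq> ?K"
    by (intro closure_minimal) (auto simp: base_chamber_eq[OF b] less_imp_le)
  show "?K \<subseteq> closure ?C"
  proof
    fix x assume x: "x \<in> ?K"
    have b\<gamma>: "0 < b \<bullet> \<gamma>" if "\<gamma> \<in> vanishing_roots P (H1 \<inter> H2)" for \<gamma>
      using b that by (auto simp: base_region_def vanishing_roots_def)
    \<comment> \<open>moving from x towards the base region enters the chamber at once\<close>
    have "x + inverse (real (Suc k)) *\<^sub>R b \<in> ?C" for k
      using x b\<gamma> by (auto simp: base_chamber_eq[OF b] inner_add_left add_nonneg_pos)
    moreover have "(\<lambda>k. x + inverse (real (Suc k)) *\<^sub>R b) \<longlonglongrightarrow> x + 0 *\<^sub>R b"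
      by (intro tendsto_intros LIMSEQ_inverse_real_of_nat)
    then have "(\<lambda>k. x + inverse (real (Suc k)) *\<^sub>R b) \<longlonglongrightarrow> x"
      by simp
    ultimately show "x \<in> closure ?C"
      unfolding closure_sequential by (intro exI[of _ "\<lambda>k. x + inverse (real (Suc k)) *\<^sub>R b"]) simp
  qed
qed

lemma convex_closure_base_chamber:
  "b \<in> base_region P \<Longrightarrow> convex (closure (base_chamber (arrangement P) (base_region P) H1 H2))"
  by (simp add: base_chamber_eq convex_closure convex_open_cone)

lemma open_base_region: "finite P \<Longrightarrow> open (base_region P)"
  unfolding base_region_def by (rule open_open_cone)

lemma aff_dim_closure_base_chamber:
  fixes P :: "'a::euclidean_space set"
  assumes "finite P" and b: "b \<in> base_region P"
  shows "aff_dim (closure (base_chamber (arrangement P) (base_region P) H1 H2)) = DIM('a)"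
proof -
  have "base_region P \<subseteq> base_chamber (arrangement P) (base_region P) H1 H2"
    unfolding base_chamber_eq[OF b] by (auto simp: base_region_def vanishing_roots_def)
  then have "base_region P \<subseteq> closure (base_chamber (arrangement P) (base_region P) H1 H2)"
    using closure_subset by blast
  then have "aff_dim (base_region P) \<le> aff_dim (closure (base_chamber (arrangement P) (base_region P) H1 H2))"
    by (rule aff_dim_subset)
  moreover have "aff_dim (base_region P) = DIM('a)"
    using aff_dim_open[OF open_base_region[OF assms(1)]] b by auto
  ultimately show ?thesis
    using aff_dim_le_DIM by (metis antisym)
qed

lemma dim_root_hyp: "\<beta> \<noteq> 0 \<Longrightarrow> dim (root_hyp (\<beta>::'a::euclidean_space)) = DIM('a) - 1"
  by (simp add: root_hyp_eq dim_hyperplane)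

lemma aff_dim_root_hyp: "\<beta> \<noteq> 0 \<Longrightarrow> aff_dim (root_hyp (\<beta>::'a::euclidean_space)) = DIM('a) - 1"
  using DIM_positive[where 'a='a]
  by (simp add: aff_dim_subspace subspace_root_hyp dim_root_hyp of_nat_diff)

lemma dim_Int_root_hyp_less:
  fixes \<alpha> \<gamma> :: "'a::euclidean_space"
  assumes "\<alpha> \<noteq> 0" "\<gamma> \<noteq> 0" "root_hyp \<alpha> \<noteq> root_hyp \<gamma>"
  shows "dim (root_hyp \<alpha> \<inter> root_hyp \<gamma>) < DIM('a) - 1"
proof (rule ccontr)
  assume "\<not> ?thesis"
  then have "dim (root_hyp \<alpha>) \<le> dim (root_hyp \<alpha> \<inter> root_hyp \<gamma>)"
    unfolding dim_root_hyp[OF assms(1)] by linarith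
  then have "root_hyp \<alpha> \<inter> root_hyp \<gamma> = root_hyp \<alpha>"
    by (intro subspace_dim_equal subspace_inter subspace_root_hyp) auto
  then have "root_hyp \<alpha> \<subseteq> root_hyp \<gamma>"
    by blast
  moreover have "dim (root_hyp \<gamma>) \<le> dim (root_hyp \<alpha>)"
    unfolding dim_root_hyp[OF assms(1)] dim_root_hyp[OF assms(2)] by simp
  ultimately have "root_hyp \<alpha> = root_hyp \<gamma>"
    by (intro subspace_dim_equal subspace_root_hyp)
  then show False
    using assms by simp
qed

lemma dim_Int_root_hyp:
  fixes \<alpha> \<gamma> :: "'a::euclidean_space"
  assumes "\<alpha> \<noteq> 0" "\<gamma> \<noteq> 0" "root_hyp \<alpha> \<noteq> root_hyp \<gamma>"
  shows "dim (root_hyp \<alpha> \<inter> root_hyp \<gamma>) = DIM('a) - 2"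
proof -
  have "dim {x + y |x y. x \<in> root_hyp \<alpha> \<and> y \<in> root_hyp \<gamma>} + dim (root_hyp \<alpha> \<inter> root_hyp \<gamma>)
        = dim (root_hyp \<alpha>) + dim (root_hyp \<gamma>)"
    by (rule dim_sums_Int[OF subspace_root_hyp subspace_root_hyp])
  moreover have "dim {x + y |x y. x \<in> root_hyp \<alpha> \<and> y \<in> root_hyp \<gamma>} \<le> DIM('a)"
    by (rule dim_subset_UNIV)
  ultimately show ?thesis
    using dim_Int_root_hyp_less[OF assms] dim_root_hyp[OF assms(1)] dim_root_hyp[OF assms(2)]
    by linarith
qed

lemma root_hyp_Int_eq_if_subset:
  fixes \<alpha>1 \<alpha>2 \<beta> \<gamma> :: "'a::euclidean_space"
  assumes "\<alpha>1 \<noteq> 0" "\<alpha>2 \<noteq> 0" "root_hyp \<alpha>1 \<noteq> root_hyp \<alpha>2"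
    and "\<beta> \<noteq> 0" "\<gamma> \<noteq> 0" "root_hyp \<beta> \<noteq> root_hyp \<gamma>"
    and "root_hyp \<alpha>1 \<inter> root_hyp \<alpha>2 \<subseteq> root_hyp \<beta> \<inter> root_hyp \<gamma>"
  shows "root_hyp \<beta> \<inter> root_hyp \<gamma> = root_hyp \<alpha>1 \<inter> root_hyp \<alpha>2"
  using assms dim_Int_root_hyp[OF assms(1-3)] dim_Int_root_hyp[OF assms(4-6)]
  by (intro subspace_dim_equal[symmetric] subspace_inter subspace_root_hyp) auto

lemma not_basic_if_positive_combination:
  fixes P :: "'a::euclidean_space set"
  assumes "finite P" and b: "b \<in> base_region P"
    and \<gamma>: "\<gamma>1 \<in> vanishing_roots P (H1 \<inter> H2)" "\<gamma>2 \<in> vanishing_roots P (H1 \<inter> H2)"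
      "\<gamma>1 \<noteq> 0" "\<gamma>2 \<noteq> 0" "root_hyp \<gamma>1 \<noteq> root_hyp \<gamma>2"
    and \<beta>: "\<beta> = a *\<^sub>R \<gamma>1 + c *\<^sub>R \<gamma>2" "0 < a" "0 < c"
  shows "\<not> is_basic (arrangement P) (base_region P) H1 H2 (root_hyp \<beta>)"
proof
  let ?K = "closure (base_chamber (arrangement P) (base_region P) H1 H2)"
  assume "is_basic (arrangement P) (base_region P) H1 H2 (root_hyp \<beta>)"
  then obtain F where F: "F facet_of ?K" "F \<subseteq> root_hyp \<beta>"
    unfolding is_basic_def by blast
  \<comment> \<open>on the closed chamber both summands of the root are nonnegative, so a zero of the root
    is a zero of both\<close>
  have "F \<subseteq> root_hyp \<gamma>1 \<inter> root_hyp \<gamma>2"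
  proof
    fix x assume x: "x \<in> F"
    then have "x \<in> ?K"
      using F(1) facet_of_imp_subset by blast
    then have "0 \<le> x \<bullet> \<gamma>1" "0 \<le> x \<bullet> \<gamma>2"
      using \<gamma>(1,2) by (simp_all add: closure_base_chamber_eq[OF b])
    moreover have "a * (x \<bullet> \<gamma>1) + c * (x \<bullet> \<gamma>2) = 0"
      using F(2) x by (auto simp: \<beta> root_hyp_def inner_add_right)
    ultimately show "x \<in> root_hyp \<gamma>1 \<inter> root_hyp \<gamma>2"
      using \<beta>(2,3) by (simp add: root_hyp_def add_nonneg_eq_0_iff)
  qed
  then have "aff_dim F \<le> aff_dim (root_hyp \<gamma>1 \<inter> root_hyp \<gamma>2)"
    by (rule aff_dim_subset)
  also have "\<dots> = dim (root_hyp \<gamma>1 \<inter> root_hyp \<gamma>2)"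
    by (simp add: aff_dim_subspace subspace_inter subspace_root_hyp)
  moreover have "aff_dim F = int DIM('a) - 1"
    using F(1) aff_dim_closure_base_chamber[OF assms(1) b] unfolding facet_of_def by simp
  ultimately show False
    using dim_Int_root_hyp_less[OF \<gamma>(3-5)] DIM_positive[where 'a='a] by linarith
qed

lemma is_basic_if_supporting_point:
  fixes P :: "'a::euclidean_space set"
  assumes "finite P" and b: "b \<in> base_region P"
    and \<alpha>: "\<alpha> \<in> vanishing_roots P (H1 \<inter> H2)" "\<alpha> \<noteq> 0"
    and p: "p \<bullet> \<alpha> = 0"
      "\<And>\<gamma>. \<gamma> \<in> vanishing_roots P (H1 \<inter> H2) \<Longrightarrow> root_hyp \<gamma> \<noteq> root_hyp \<alpha> \<Longrightarrow> 0 < p \<bullet> \<gamma>"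
  shows "is_basic (arrangement P) (base_region P) H1 H2 (root_hyp \<alpha>)"
proof -
  let ?Q = "vanishing_roots P (H1 \<inter> H2)"
  let ?K = "closure (base_chamber (arrangement P) (base_region P) H1 H2)"
  define F where "F = ?K \<inter> {x. (- \<alpha>) \<bullet> x = 0}"
  have F: "F = ?K \<inter> root_hyp \<alpha>"
    by (auto simp: F_def root_hyp_eq)
  have "F face_of ?K"
    unfolding F_def using convex_closure_base_chamber[OF b] \<alpha>(1)
    by (intro face_of_Int_supporting_hyperplane_le)
      (auto simp: closure_base_chamber_eq[OF b] inner_commute)
  \<comment> \<open>near p the face is all of the hyperplane\<close>
  define U where "U = (\<Inter>\<gamma>\<in>{\<gamma>\<in>?Q. root_hyp \<gamma> \<noteq> root_hyp \<alpha>}. {x. \<gamma> \<bullet> x > 0})"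
  have "open U"
    using \<open>finite P\<close> unfolding U_def vanishing_roots_def by (auto intro!: open_INT open_halfspace_gt)
  have pU: "p \<in> root_hyp \<alpha> \<inter> U"
    using p by (auto simp: U_def root_hyp_def inner_commute)
  have UF: "root_hyp \<alpha> \<inter> U \<subseteq> F"
  proof
    fix x assume x: "x \<in> root_hyp \<alpha> \<inter> U"
    have "0 \<le> x \<bullet> \<gamma>" if "\<gamma> \<in> ?Q" for \<gamma>
    proof (cases "root_hyp \<gamma> = root_hyp \<alpha>")
      case True
      then have "x \<in> root_hyp \<gamma>"
        using x by blast
      then show ?thesis
        by (simp add: root_hyp_def)
    next
      case False
      then show ?thesis
        using x that by (auto simp: U_def inner_commute less_imp_le)
    qed
    then show "x \<in> F"
      using x by (simp add: F closure_base_chamber_eq[OF b])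
  qed
  have "aff_dim (root_hyp \<alpha> \<inter> U) = aff_dim (root_hyp \<alpha>)"
    using \<open>open U\<close> pU by (intro aff_dim_convex_Int_open) (auto simp: convex_root_hyp)
  then have "aff_dim F = int DIM('a) - 1"
    using aff_dim_subset[OF UF] aff_dim_subset[of F "root_hyp \<alpha>"] aff_dim_root_hyp[OF \<alpha>(2)] F
    by auto
  then have "F facet_of ?K"
    using \<open>F face_of ?K\<close> pU UF aff_dim_closure_base_chamber[OF assms(1) b]
    unfolding facet_of_def by auto
  moreover have "root_hyp \<alpha> \<in> rank2_sub (arrangement P) H1 H2"
    using \<alpha> by (auto simp: rank2_sub_arrangement)
  ultimately show ?thesis
    unfolding is_basic_def F by blast
qed

text \<open>If all roots of a rank two subarrangement other than \<beta> are positive at p \<in> H_\<beta>, then p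
  shows that H_\<beta> is basic there.\<close>

lemma cut_locus_subset:
  fixes P :: "'a::euclidean_space set"
  assumes fin: "finite P" and nz: "0 \<notin> P" and b: "b \<in> base_region P"
    and \<beta>: "\<beta> \<in> P" and p: "p \<bullet> \<beta> = 0"
    and sep: "\<And>\<gamma>. \<gamma> \<in> P \<Longrightarrow> root_hyp \<gamma> \<noteq> root_hyp \<beta> \<Longrightarrow> 0 < p \<bullet> \<gamma> \<or> root_hyp \<beta> \<inter> root_hyp \<gamma> \<subseteq> Z"
  shows "cut_locus (arrangement P) (base_region P) (root_hyp \<beta>) \<subseteq> Z"
  unfolding cut_locus_def
proof (rule Union_least)
  fix Y assume "Y \<in> {root_hyp \<beta> \<inter> G | G. G \<in> cutting_set (arrangement P) (base_region P) (root_hyp \<beta>)}"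
  then obtain G H1 H2 where Y: "Y = root_hyp \<beta> \<inter> G" and H: "H1 \<in> arrangement P" "H2 \<in> arrangement P"
    "H1 \<noteq> H2" "root_hyp \<beta> \<in> rank2_sub (arrangement P) H1 H2"
    "\<not> is_basic (arrangement P) (base_region P) H1 H2 (root_hyp \<beta>)"
    "is_basic (arrangement P) (base_region P) H1 H2 G"
    unfolding cutting_set_def cuts_def by blast
  obtain \<alpha>1 \<alpha>2 where \<alpha>: "\<alpha>1 \<in> P" "\<alpha>2 \<in> P" "H1 = root_hyp \<alpha>1" "H2 = root_hyp \<alpha>2"
    using H(1,2) by (auto simp: arrangement_def)
  let ?Q = "vanishing_roots P (H1 \<inter> H2)"
  have \<beta>Q: "\<beta> \<in> ?Q"
    using H(4) \<beta> by (auto simp: rank2_sub_arrangement vanishing_roots_def)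
  obtain \<delta> where \<delta>: "\<delta> \<in> ?Q" "G = root_hyp \<delta>"
    using H(6) by (auto simp: is_basic_def rank2_sub_arrangement)
  obtain \<gamma> where \<gamma>: "\<gamma> \<in> ?Q" "root_hyp \<gamma> \<noteq> root_hyp \<beta>" "\<not> 0 < p \<bullet> \<gamma>"
    using is_basic_if_supporting_point[OF fin b \<beta>Q _ p] nz \<beta> H(5) by blast
  have "root_hyp \<beta> \<inter> root_hyp \<delta> = root_hyp \<alpha>1 \<inter> root_hyp \<alpha>2"
    using \<alpha> H(3,5,6) nz \<beta>Q \<delta>
    by (intro root_hyp_Int_eq_if_subset) (auto simp: vanishing_roots_def)
  moreover have "root_hyp \<alpha>1 \<inter> root_hyp \<alpha>2 \<subseteq> root_hyp \<beta> \<inter> root_hyp \<gamma>"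
    using \<gamma>(1) \<beta>Q \<alpha> by (auto simp: vanishing_roots_def)
  moreover have "root_hyp \<beta> \<inter> root_hyp \<gamma> \<subseteq> Z"
    using sep \<gamma> by (auto simp: vanishing_roots_def)
  ultimately show "Y \<subseteq> Z"
    using Y \<delta> by auto
qed

text \<open>Conversely, H_\<alpha> cuts H_\<beta> if \<beta> is a positive combination of \<alpha> and another root and
  p \<in> H_\<alpha> is positive on the other roots vanishing on H_\<alpha> \<inter> H_\<beta>. Those roots also vanish
  at q \<in> H_\<alpha> \<inter> H_\<beta>, which makes the last hypothesis easy to check for a generic q.\<close>

lemma root_hyp_Int_subset_cut_locus:
  fixes P :: "'a::euclidean_space set"
  assumes fin: "finite P" and nz: "0 \<notin> P" and b: "b \<in> base_region P"
    and roots: "\<beta> \<in> P" "\<alpha> \<in> P" "\<gamma> \<in> P"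
    and comb: "\<beta> = a *\<^sub>R \<alpha> + c *\<^sub>R \<gamma>" "0 < a" "0 < c"
    and q: "q \<in> root_hyp \<beta> \<inter> root_hyp \<alpha>"
    and p: "p \<bullet> \<alpha> = 0" "p \<bullet> \<beta> \<noteq> 0"
    and sep: "\<And>\<delta>. \<delta> \<in> P \<Longrightarrow> q \<bullet> \<delta> \<noteq> 0 \<or> 0 < p \<bullet> \<delta> \<or> \<delta> = \<alpha>"
  shows "root_hyp \<beta> \<inter> root_hyp \<alpha> \<subseteq> cut_locus (arrangement P) (base_region P) (root_hyp \<beta>)"
proof -
  let ?H1 = "root_hyp \<beta>" and ?H2 = "root_hyp \<alpha>"
  let ?Q = "vanishing_roots P (?H1 \<inter> ?H2)"
  have \<gamma>: "c * (x \<bullet> \<gamma>) = x \<bullet> \<beta> - a * (x \<bullet> \<alpha>)" for x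
    using comb(1) by (simp add: inner_add_right)
  then have "p \<bullet> \<gamma> \<noteq> 0"
    using p comb(3) by (metis diff_zero mult_zero_left mult_zero_right)
  then have "root_hyp \<alpha> \<noteq> root_hyp \<gamma>" "root_hyp \<alpha> \<noteq> root_hyp \<beta>"
    using p by (auto simp: root_hyp_def)
  have "x \<bullet> \<gamma> = 0" if "x \<in> ?H1 \<inter> ?H2" for x
    using that \<gamma>[of x] comb(3) by (simp add: root_hyp_def)
  then have Q: "\<alpha> \<in> ?Q" "\<beta> \<in> ?Q" "\<gamma> \<in> ?Q"
    using roots by (auto simp: vanishing_roots_def root_hyp_def)
  have "is_basic (arrangement P) (base_region P) ?H1 ?H2 ?H2"
  proof (rule is_basic_if_supporting_point[OF fin b Q(1) _ p(1)])
    show "\<alpha> \<noteq> 0"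
      using nz roots by auto
    fix \<delta> assume "\<delta> \<in> ?Q" "root_hyp \<delta> \<noteq> root_hyp \<alpha>"
    moreover from this have "q \<bullet> \<delta> = 0"
      using q by (auto simp: vanishing_roots_def root_hyp_def)
    ultimately show "0 < p \<bullet> \<delta>"
      using sep by (auto simp: vanishing_roots_def)
  qed
  moreover have "\<not> is_basic (arrangement P) (base_region P) ?H1 ?H2 ?H1"
    using Q nz roots \<open>root_hyp \<alpha> \<noteq> root_hyp \<gamma>\<close>
    by (intro not_basic_if_positive_combination[OF fin b _ _ _ _ _ comb]) auto
  moreover have "?H1 \<in> rank2_sub (arrangement P) ?H1 ?H2"
    using Q by (auto simp: rank2_sub_arrangement)
  ultimately have "?H2 \<in> cutting_set (arrangement P) (base_region P) ?H1"
    using roots \<open>root_hyp \<alpha> \<noteq> root_hyp \<beta>\<close>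
    unfolding cutting_set_def cuts_def by (auto simp: arrangement_def)
  then show ?thesis
    unfolding cut_locus_def by blast
qed

lemma closed_cut_locus:
  assumes "finite P"
  shows "closed (cut_locus (arrangement P) B (root_hyp \<beta>))"
proof -
  let ?G = "cutting_set (arrangement P) B (root_hyp \<beta>)"
  have G: "?G \<subseteq> root_hyp ` P"
    by (auto simp: cutting_set_def arrangement_def)
  then have "finite ?G"
    using assms finite_subset by blast
  moreover have "cut_locus (arrangement P) B (root_hyp \<beta>) = (\<Union>G\<in>?G. root_hyp \<beta> \<inter> G)"
    unfolding cut_locus_def by blast
  ultimately show ?thesis
    using G by (auto intro!: closed_UN closed_Int closed_root_hyp)
qed

lemma aff_dim_component_root_hyp_diff:
  fixes \<beta> :: "'a::euclidean_space"
  assumes "\<beta> \<noteq> 0" "closed Z" "C \<in> components (root_hyp \<beta> - Z)"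
  shows "aff_dim C = int DIM('a) - 1"
proof -
  have "openin (top_of_set (root_hyp \<beta>)) (root_hyp \<beta> - Z)"
    using \<open>closed Z\<close> openin_open_Int[of "- Z" "root_hyp \<beta>"] by (simp add: Diff_eq open_Compl)
  then have "openin (top_of_set (root_hyp \<beta>)) C"
    using assms(3) locally_connected_open_component[THEN iffD1,
        OF convex_imp_locally_connected[OF convex_root_hyp]] by blast
  moreover have "C \<noteq> {}"
    using assms(3) in_components_nonempty by blast
  ultimately have "aff_dim C = aff_dim (root_hyp \<beta>)"
    by (intro aff_dim_openin) (auto simp: root_hyp_eq affine_hyperplane)
  then show ?thesis
    using aff_dim_root_hyp[OF assms(1)] by simp
qed

lemma shards_of_disjoint:
  fixes P :: "'a::euclidean_space set"
  assumes "finite P" "0 \<notin> P" "\<beta> \<in> P" "\<beta>' \<in> P" "root_hyp \<beta> \<noteq> root_hyp \<beta>'"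
  shows "shards_of (arrangement P) B (root_hyp \<beta>) \<inter> shards_of (arrangement P) B (root_hyp \<beta>') = {}"
proof (rule ccontr)
  assume "\<not> ?thesis"
  then obtain C C' where
    C: "C \<in> components (root_hyp \<beta> - cut_locus (arrangement P) B (root_hyp \<beta>))" and
    C': "C' \<in> components (root_hyp \<beta>' - cut_locus (arrangement P) B (root_hyp \<beta>'))" and
    eq: "closure C = closure C'"
    unfolding shards_of_eq_cut_locus by blast
  have "C' \<subseteq> root_hyp \<beta>'"
    using C' in_components_subset by blast
  then have "closure C' \<subseteq> root_hyp \<beta>'"
    by (intro closure_minimal closed_root_hyp)
  then have "C \<subseteq> root_hyp \<beta> \<inter> root_hyp \<beta>'"
    using C in_components_subset closure_subset eq by blast
  then have "aff_dim C \<le> aff_dim (root_hyp \<beta> \<inter> root_hyp \<beta>')"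
    by (rule aff_dim_subset)
  also have "\<dots> = dim (root_hyp \<beta> \<inter> root_hyp \<beta>')"
    by (simp add: aff_dim_subspace subspace_inter subspace_root_hyp)
  moreover have "aff_dim C = int DIM('a) - 1"
    using assms(2,3) closed_cut_locus[OF assms(1)] C by (intro aff_dim_component_root_hyp_diff) auto
  moreover have "dim (root_hyp \<beta> \<inter> root_hyp \<beta>') < DIM('a) - 1"
    using assms(2-5) by (intro dim_Int_root_hyp_less) auto
  ultimately show False
    using DIM_positive[where 'a='a] by linarith
qed

lemma fibre_in_components:
  fixes S :: "'a::euclidean_space set"
  assumes conv: "convex {x\<in>S. cls x = s}" and s: "s \<in> cls ` S"
    and op: "\<And>t. t \<in> cls ` S \<Longrightarrow> \<exists>U. open U \<and> {x\<in>S. cls x = t} = S \<inter> U"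
  shows "{x\<in>S. cls x = s} \<in> components S"
  unfolding in_components_maximal
proof (intro conjI allI impI)
  define R where "R t = {x\<in>S. cls x = t}" for t
  obtain U where U: "\<And>t. t \<in> cls ` S \<Longrightarrow> open (U t) \<and> R t = S \<inter> U t"
    using op unfolding R_def by metis
  show "R s \<noteq> {}" "R s \<subseteq> S" "connected (R s)"
    using s conv by (auto simp: R_def intro: convex_connected)
  fix D assume D: "D \<noteq> {} \<and> R s \<subseteq> D \<and> D \<subseteq> S \<and> connected D"
  define V where "V = \<Union>(U ` (cls ` S - {s}))"
  have "open V"
    using U by (auto simp: V_def)
  have cover: "D \<subseteq> U s \<union> V"
  proof
    fix x assume "x \<in> D"
    then have "x \<in> R (cls x)" "cls x \<in> cls ` S"
      using D by (auto simp: R_def)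
    then show "x \<in> U s \<union> V"
      using U[of "cls x"] by (cases "cls x = s") (auto simp: V_def)
  qed
  have "U s \<inter> V \<inter> D = {}"
  proof (rule ccontr)
    assume "U s \<inter> V \<inter> D \<noteq> {}"
    then obtain x t where x: "x \<in> U s" "x \<in> D" "t \<in> cls ` S" "t \<noteq> s" "x \<in> U t"
      by (auto simp: V_def)
    then have "x \<in> R s" "x \<in> R t"
      using U[of s] U[of t] D s by auto
    then show False
      using x by (auto simp: R_def)
  qed
  moreover have "U s \<inter> D \<noteq> {}"
    using D \<open>R s \<noteq> {}\<close> U[OF s] by blast
  ultimately have "V \<inter> D = {}"
    using connectedD[of D "U s" V] D U[OF s] \<open>open V\<close> cover by blast
  then show "D = R s"
    using cover D U[OF s] by blast
qed

lemma components_eq_fibres: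
  fixes S :: "'a::euclidean_space set"
  assumes conv: "\<And>s. s \<in> cls ` S \<Longrightarrow> convex {x\<in>S. cls x = s}"
    and op: "\<And>s. s \<in> cls ` S \<Longrightarrow> \<exists>U. open U \<and> {x\<in>S. cls x = s} = S \<inter> U"
  shows "components S = (\<lambda>s. {x\<in>S. cls x = s}) ` cls ` S"
proof
  show "(\<lambda>s. {x\<in>S. cls x = s}) ` cls ` S \<subseteq> components S"
    using fibre_in_components[OF conv _ op] by blast
  show "components S \<subseteq> (\<lambda>s. {x\<in>S. cls x = s}) ` cls ` S"
  proof
    fix C assume C: "C \<in> components S"
    then obtain x where "x \<in> C" "x \<in> S"
      using in_components_nonempty in_components_subset by blast
    then have "C = {y\<in>S. cls y = cls x}"
      using components_eq[OF C fibre_in_components[OF conv _ op]] by blast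
    then show "C \<in> (\<lambda>s. {x\<in>S. cls x = s}) ` cls ` S"
      using \<open>x \<in> S\<close> by blast
  qed
qed

lemma card_closure_components_fibres:
  fixes S :: "'a::euclidean_space set"
  assumes conv: "\<And>s. s \<in> cls ` S \<Longrightarrow> convex {x\<in>S. cls x = s}"
    and op: "\<And>s. s \<in> cls ` S \<Longrightarrow> \<exists>U. open U \<and> {x\<in>S. cls x = s} = S \<inter> U"
  shows "card (closure ` components S) = card (cls ` S)"
proof -
  \<comment> \<open>a fibre is relatively open, so it is disjoint from the closure of any other fibre\<close>
  have "inj_on (\<lambda>s. closure {x\<in>S. cls x = s}) (cls ` S)"
  proof (rule inj_onI)
    fix s t assume st: "s \<in> cls ` S" "t \<in> cls ` S"
      and eq: "closure {x\<in>S. cls x = s} = closure {x\<in>S. cls x = t}"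
    obtain U where U: "open U" "{x\<in>S. cls x = s} = S \<inter> U"
      using op[OF st(1)] by blast
    have "U \<inter> closure {x\<in>S. cls x = t} \<noteq> {}"
      using st(1) U(2) eq closure_subset by blast
    then obtain y where "y \<in> U" "y \<in> S" "cls y = t"
      using open_Int_closure_eq_empty[OF U(1)] by blast
    then show "s = t"
      using U(2) by auto
  qed
  moreover have "closure ` components S = (\<lambda>s. closure {x\<in>S. cls x = s}) ` cls ` S"
    by (simp only: components_eq_fibres[OF conv op] image_comp comp_def)
  ultimately show ?thesis
    by (simp add: card_image)
qed

lemma card_closure_components_sign_classes:
  fixes W H :: "'a::euclidean_space set"
  defines "S \<equiv> H - \<Union>(root_hyp ` W)"
  assumes "finite W" "convex H"
    and cls: "\<And>x y. x \<in> S \<Longrightarrow> y \<in> S \<Longrightarrow> cls x = cls y \<longleftrightarrow> (\<forall>w\<in>W. (0 < w \<bullet> x) = (0 < w \<bullet> y))"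
  shows "card (closure ` components S) = card (cls ` S)"
proof (rule card_closure_components_fibres)
  define U where "U x = (\<Inter>w\<in>W. {y. 0 < (if 0 < w \<bullet> x then w else - w) \<bullet> y})" for x
  have fibre: "{y\<in>S. cls y = cls x} = H \<inter> U x" "{y\<in>S. cls y = cls x} = S \<inter> U x"
    if "x \<in> S" for x
  proof -
    have "w \<bullet> x \<noteq> 0" "y \<in> S \<Longrightarrow> w \<bullet> y \<noteq> 0" if "w \<in> W" for w y
      using \<open>x \<in> S\<close> that by (auto simp: S_def root_hyp_eq)
    then have "y \<in> S \<Longrightarrow> cls y = cls x \<longleftrightarrow> y \<in> U x" for y
      using cls[OF _ \<open>x \<in> S\<close>] by (auto simp: U_def) (smt (verit))+
    moreover have "H \<inter> U x \<subseteq> S"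
      by (force simp: S_def U_def root_hyp_eq split: if_splits)
    ultimately show "{y\<in>S. cls y = cls x} = H \<inter> U x" "{y\<in>S. cls y = cls x} = S \<inter> U x"
      by (auto simp: S_def)
  qed
  have oU: "open (U x)" and cU: "convex (U x)" for x
    using \<open>finite W\<close> unfolding U_def
    by (auto intro!: open_INT convex_INT open_halfspace_gt convex_halfspace_gt)
  fix s assume "s \<in> cls ` S"
  then obtain x where x: "x \<in> S" "s = cls x"
    by blast
  show "convex {y\<in>S. cls y = s}"
    using fibre(1)[OF x(1)] cU[of x] \<open>convex H\<close> x(2) by (simp add: convex_Int)
  show "\<exists>U. open U \<and> {y\<in>S. cls y = s} = S \<inter> U"
    using fibre(2)[OF x(1)] oU[of x] x(2) by blast
qed

lemma card_shards_of_sign_classes: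
  fixes W :: "'a::euclidean_space set"
  assumes cut: "cut_locus A B (root_hyp \<beta>) = root_hyp \<beta> \<inter> \<Union>(root_hyp ` W)" and "finite W"
    and cls: "\<And>x y. x \<in> root_hyp \<beta> - \<Union>(root_hyp ` W) \<Longrightarrow> y \<in> root_hyp \<beta> - \<Union>(root_hyp ` W) \<Longrightarrow>
      cls x = cls y \<longleftrightarrow> (\<forall>w\<in>W. (0 < w \<bullet> x) = (0 < w \<bullet> y))"
  shows "card (shards_of A B (root_hyp \<beta>)) = card (cls ` (root_hyp \<beta> - \<Union>(root_hyp ` W)))"
proof -
  have "root_hyp \<beta> - cut_locus A B (root_hyp \<beta>) = root_hyp \<beta> - \<Union>(root_hyp ` W)"
    using cut by blast
  then show ?thesis
    unfolding shards_of_eq_cut_locus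
    using card_closure_components_sign_classes[OF \<open>finite W\<close> convex_root_hyp cls] by simp
qed

lemma restrict_eq_iff_PiE:
  assumes "s \<in> Pi\<^sub>E A B"
  shows "restrict f A = s \<longleftrightarrow> (\<forall>k\<in>A. f k = s k)"
  using assms by (metis PiE_restrict restrict_apply' restrict_ext)

lemma restrict_eq_restrict_iff: "restrict f A = restrict g A \<longleftrightarrow> (\<forall>k\<in>A. f k = g k)"
  by (metis restrict_apply' restrict_ext)

lemma sum_upper_triangle:
  fixes a n :: nat and g :: "nat \<Rightarrow> nat \<Rightarrow> 'a::comm_monoid_add"
  shows "(\<Sum>(i, j)\<in>{(i, j). a \<le> i \<and> i < j \<and> j \<le> n}. g i j) = (\<Sum>j\<in>{1..n}. \<Sum>i\<in>{a..<j}. g i j)"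
proof -
  have "{(i, j). a \<le> i \<and> i < j \<and> j \<le> n} = (\<lambda>(j, i). (i, j)) ` (SIGMA j:{1..n}. {a..<j})"
    by (auto simp: image_iff)
  moreover have "inj_on (\<lambda>(j, i). (i, j)) (SIGMA j:{1..n}. {a..<j})"
    by (auto simp: inj_on_def)
  ultimately have "(\<Sum>(i, j)\<in>{(i, j). a \<le> i \<and> i < j \<and> j \<le> n}. g i j)
               = (\<Sum>(j, i)\<in>(SIGMA j:{1..n}. {a..<j}). g i j)"
    by (simp add: sum.reindex case_prod_unfold comp_def)
  also have "\<dots> = (\<Sum>j\<in>{1..n}. \<Sum>i\<in>{a..<j}. g i j)"
    by (rule sum.Sigma[symmetric]) auto
  finally show ?thesis .
qed

lemma sum_powers_of_two_desc: "(\<Sum>i\<in>{0..<j}. (2::nat) ^ (j - i - 1)) = 2 ^ j - 1"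
  using sum.nat_diff_reindex[where g = "\<lambda>i. (2::nat) ^ i" and n = j]
  by (simp add: atLeast0LessThan sum_power2[unfolded atLeast0LessThan])

lemma sum_powers_two_three:
  assumes "1 \<le> j"
  shows "(\<Sum>i\<in>{1..<j}. (2::nat) ^ (j - i) * 3 ^ (i - 1)) + 2 ^ j = 2 * 3 ^ (j - 1)"
  using assms
proof (induction j rule: nat_induct_at_least)
  case (Suc j)
  have "(\<Sum>i\<in>{1..<j}. (2::nat) ^ (Suc j - i) * 3 ^ (i - 1)) = 2 * (\<Sum>i\<in>{1..<j}. 2 ^ (j - i) * 3 ^ (i - 1))"
    unfolding sum_distrib_left by (intro sum.cong) (auto simp: Suc_diff_le)
  moreover have "(3::nat) ^ (Suc j - 1) = 3 * 3 ^ (j - 1)"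
    using Suc.hyps by (cases j) auto
  ultimately show ?case
    using Suc by (simp add: sum.atLeastLessThan_Suc)
qed simp

lemma sum_shard_counts_B:
  "(\<Sum>j\<in>{1..n}. \<Sum>i\<in>{0..<j}. (2::nat) ^ (j - i - 1))
     + (\<Sum>j\<in>{1..n}. \<Sum>i\<in>{1..<j}. (2::nat) ^ (j - i) * 3 ^ (i - 1)) = 3 ^ n - n - 1"
proof -
  have "(\<Sum>j\<in>{1..n}. \<Sum>i\<in>{0..<j}. (2::nat) ^ (j - i - 1))
          + (\<Sum>j\<in>{1..n}. \<Sum>i\<in>{1..<j}. (2::nat) ^ (j - i) * 3 ^ (i - 1)) + n + 1 = 3 ^ n"
  proof (induction n)
    case (Suc n)
    let ?r0 = "\<lambda>j. \<Sum>i\<in>{0..<j}. (2::nat) ^ (j - i - 1)"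
    let ?r1 = "\<lambda>j. \<Sum>i\<in>{1..<j}. (2::nat) ^ (j - i) * 3 ^ (i - 1)"
    have "?r0 (Suc n) + 1 = 2 ^ Suc n"
      unfolding sum_powers_of_two_desc by simp
    moreover have "?r1 (Suc n) + 2 ^ Suc n = 2 * 3 ^ n"
      using sum_powers_two_three[of "Suc n"] by simp
    moreover have "(\<Sum>j\<in>{1..Suc n}. ?r0 j) = (\<Sum>j\<in>{1..n}. ?r0 j) + ?r0 (Suc n)"
      "(\<Sum>j\<in>{1..Suc n}. ?r1 j) = (\<Sum>j\<in>{1..n}. ?r1 j) + ?r1 (Suc n)"
      by (simp_all only: sum.cl_ivl_Suc) simp_all
    ultimately show ?case
      using Suc.IH by simp
  qed simp
  then show ?thesis
    by simp
qed

text \<open>The possible values of (x_k < x_u, x_k < x_v) on H_{u,-v} when e = (0 < x_u): there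
  x_v = - x_u, so one of the two comparisons implies the other.\<close>

definition sign_pairs :: "bool \<Rightarrow> (bool \<times> bool) set" where
  "sign_pairs e = (if e then {(True, True), (True, False), (False, False)}
                   else {(True, True), (False, True), (False, False)})"

lemma finite_sign_pairs: "finite (sign_pairs e)" and card_sign_pairs: "card (sign_pairs e) = 3"
  by (simp_all add: sign_pairs_def)

definition coord_vec :: "(nat \<Rightarrow> 'n::finite) \<Rightarrow> nat \<Rightarrow> (nat \<Rightarrow> real) \<Rightarrow> real^'n" where
  "coord_vec \<sigma> n f = (\<chi> c. f (inv_into {1..n} \<sigma> c))"

context
  fixes \<sigma> :: "nat \<Rightarrow> 'n::finite" and n :: nat
  assumes bij: "bij_betw \<sigma> {1..n} UNIV"
begin

abbreviation (input) "PB \<equiv> posroots_B \<sigma> n"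
abbreviation (input) "cut_locus_B H \<equiv> cut_locus (arrangement PB) (base_region PB) H"

lemma coord_vec_nth [simp]: "1 \<le> k \<Longrightarrow> k \<le> n \<Longrightarrow> coord_vec \<sigma> n f $ \<sigma> k = f k"
  using bij by (simp add: coord_vec_def bij_betw_def inv_into_f_f)

lemma inner_eps [simp]: "x \<bullet> eps \<sigma> k = x $ \<sigma> k" "eps \<sigma> k \<bullet> x = x $ \<sigma> k"
  by (simp_all add: eps_def inner_axis inner_axis')

lemma mem_root_hyp_eps [simp]:
  "x \<in> root_hyp (eps \<sigma> j) \<longleftrightarrow> x $ \<sigma> j = 0"
  "x \<in> root_hyp (eps \<sigma> j - eps \<sigma> i) \<longleftrightarrow> x $ \<sigma> j = x $ \<sigma> i"
  "x \<in> root_hyp (eps \<sigma> j + eps \<sigma> i) \<longleftrightarrow> x $ \<sigma> i = - x $ \<sigma> j"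
  by (auto simp: root_hyp_def inner_diff_right inner_add_right)

lemma eps_in_posroots_B:
  "1 \<le> i \<Longrightarrow> i \<le> n \<Longrightarrow> eps \<sigma> i \<in> PB"
  "1 \<le> i \<Longrightarrow> i < j \<Longrightarrow> j \<le> n \<Longrightarrow> eps \<sigma> j - eps \<sigma> i \<in> PB"
  "1 \<le> i \<Longrightarrow> i \<le> n \<Longrightarrow> 1 \<le> j \<Longrightarrow> j \<le> n \<Longrightarrow> i \<noteq> j \<Longrightarrow> eps \<sigma> j + eps \<sigma> i \<in> PB"
  unfolding posroots_B_def by (auto simp: add.commute intro: linorder_neqE_nat)

lemma posroots_B_cases:
  assumes "\<gamma> \<in> PB"
  obtains (diff) i j where "1 \<le> i" "i < j" "j \<le> n" "\<gamma> = eps \<sigma> j - eps \<sigma> i"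
    | (sum) i j where "1 \<le> i" "i < j" "j \<le> n" "\<gamma> = eps \<sigma> j + eps \<sigma> i"
    | (eps) i where "1 \<le> i" "i \<le> n" "\<gamma> = eps \<sigma> i"
  using assms unfolding posroots_B_def by blast

lemma finite_posroots_B: "finite PB"
proof -
  have "PB \<subseteq> (\<lambda>(i, j). eps \<sigma> j - eps \<sigma> i) ` ({1..n} \<times> {1..n})
     \<union> (\<lambda>(i, j). eps \<sigma> j + eps \<sigma> i) ` ({1..n} \<times> {1..n}) \<union> eps \<sigma> ` {1..n}"
    unfolding posroots_B_def by force
  then show ?thesis
    by (rule finite_subset) auto
qed

lemma coord_vec_in_base_region: "coord_vec \<sigma> n real \<in> base_region PB"
  unfolding base_region_def by (auto simp: posroots_B_def inner_diff_right inner_add_right)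

lemma zero_notin_posroots_B: "0 \<notin> PB"
  using coord_vec_in_base_region by (force simp: base_region_def)

lemmas cut_locus_B_subset =
  cut_locus_subset[OF finite_posroots_B zero_notin_posroots_B coord_vec_in_base_region]
lemmas root_hyp_Int_subset_cut_locus_B =
  root_hyp_Int_subset_cut_locus[OF finite_posroots_B zero_notin_posroots_B coord_vec_in_base_region]

text \<open>In the cut locus computations below, p is a point of H_\<beta> whose coordinates are as
  distinct as H_\<beta> allows, positive on as many roots as possible, and q is a point of H_\<beta> \<inter> H_\<alpha> whose remaining
  coordinates are distinct and nonzero, so that only roots through H_\<beta> \<inter> H_\<alpha> vanish at q.\<close>

lemma cut_locus_B_root_hyp_eps:
  assumes b: "1 \<le> b" "b \<le> n"
  shows "cut_locus_B (root_hyp (eps \<sigma> b)) = root_hyp (eps \<sigma> b) \<inter> \<Union>(root_hyp ` eps \<sigma> ` {1..<b})"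
proof (intro equalityI subsetI)
  fix x assume x: "x \<in> cut_locus_B (root_hyp (eps \<sigma> b))"
  have "cut_locus_B (root_hyp (eps \<sigma> b)) \<subseteq> \<Union>(root_hyp ` eps \<sigma> ` {1..<b})"
    using b by (intro cut_locus_B_subset[OF eps_in_posroots_B(1),
          where p = "coord_vec \<sigma> n (\<lambda>m. if m = b then 0 else real m)"])
      (auto simp: posroots_B_def inner_diff_right inner_add_right split: if_split_asm)
  then show "x \<in> root_hyp (eps \<sigma> b) \<inter> \<Union>(root_hyp ` eps \<sigma> ` {1..<b})"
    using x cut_locus_subset_hyperplane by blast
next
  fix x assume "x \<in> root_hyp (eps \<sigma> b) \<inter> \<Union>(root_hyp ` eps \<sigma> ` {1..<b})"
  then obtain k where k: "1 \<le> k" "k < b" "x \<in> root_hyp (eps \<sigma> b) \<inter> root_hyp (eps \<sigma> k)"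
    by auto
  have "root_hyp (eps \<sigma> b) \<inter> root_hyp (eps \<sigma> k) \<subseteq> cut_locus_B (root_hyp (eps \<sigma> b))"
    by (rule root_hyp_Int_subset_cut_locus_B[where \<gamma> = "eps \<sigma> b - eps \<sigma> k" and a = 1 and c = 1
          and q = "coord_vec \<sigma> n (\<lambda>m. if m = b \<or> m = k then 0 else real m)"
          and p = "coord_vec \<sigma> n (\<lambda>m. if m = b then 1 else 0)"])
      (use k b in \<open>auto simp: eps_in_posroots_B inner_diff_right inner_add_right elim!: posroots_B_cases
         split: if_split_asm\<close>)
  then show "x \<in> cut_locus_B (root_hyp (eps \<sigma> b))"
    using k by blast
qed

lemma card_shards_root_hyp_eps:
  assumes b: "1 \<le> b" "b \<le> n"
  shows "card (shards_of (arrangement PB) (base_region PB) (root_hyp (eps \<sigma> b))) = 2 ^ (b - 1)"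
proof -
  let ?H = "root_hyp (eps \<sigma> b)"
  let ?S = "?H - \<Union>(root_hyp ` eps \<sigma> ` {1..<b})"
  let ?cls = "\<lambda>x. restrict (\<lambda>k. 0 < x $ \<sigma> k) {1..<b}"
  have "card (shards_of (arrangement PB) (base_region PB) ?H) = card (?cls ` ?S)"
    by (rule card_shards_of_sign_classes[OF cut_locus_B_root_hyp_eps[OF b]])
      (auto simp: restrict_eq_restrict_iff)
  also have "?cls ` ?S = Pi\<^sub>E {1..<b} (\<lambda>_. UNIV)"
  proof
    show "?cls ` ?S \<subseteq> Pi\<^sub>E {1..<b} (\<lambda>_. UNIV)"
      by auto
    show "Pi\<^sub>E {1..<b} (\<lambda>_. UNIV) \<subseteq> ?cls ` ?S"
    proof
      fix s assume s: "s \<in> Pi\<^sub>E {1..<b} (\<lambda>_. UNIV :: bool set)"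
      define x where "x = coord_vec \<sigma> n (\<lambda>m. if m < b then if s m then 1 else -1 else 0)"
      have "x \<in> ?S"
        using b by (auto simp: x_def split: if_split_asm)
      moreover have "?cls x = s"
        unfolding restrict_eq_iff_PiE[OF s] using b by (auto simp: x_def)
      ultimately show "s \<in> ?cls ` ?S"
        by blast
    qed
  qed
  also have "card (Pi\<^sub>E {1..<b} (\<lambda>_. UNIV :: bool set)) = 2 ^ (b - 1)"
    by (simp add: card_PiE card_UNIV_bool)
  finally show ?thesis .
qed

lemma cut_locus_B_root_hyp_diff:
  assumes ab: "1 \<le> a" "a < b" "b \<le> n"
  shows "cut_locus_B (root_hyp (eps \<sigma> b - eps \<sigma> a))
           = root_hyp (eps \<sigma> b - eps \<sigma> a) \<inter> \<Union>(root_hyp ` (\<lambda>k. eps \<sigma> k - eps \<sigma> a) ` {a<..<b})"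
proof (intro equalityI subsetI)
  fix x assume x: "x \<in> cut_locus_B (root_hyp (eps \<sigma> b - eps \<sigma> a))"
  have "cut_locus_B (root_hyp (eps \<sigma> b - eps \<sigma> a)) \<subseteq> \<Union>(root_hyp ` (\<lambda>k. eps \<sigma> k - eps \<sigma> a) ` {a<..<b})"
    using ab by (intro cut_locus_B_subset[OF eps_in_posroots_B(2),
          where p = "coord_vec \<sigma> n (\<lambda>m. if m = b then real a else real m)"])
      (auto simp: posroots_B_def inner_diff_right inner_add_right not_less le_eq_less_or_eq
        split: if_split_asm)
  then show "x \<in> root_hyp (eps \<sigma> b - eps \<sigma> a) \<inter> \<Union>(root_hyp ` (\<lambda>k. eps \<sigma> k - eps \<sigma> a) ` {a<..<b})"
    using x cut_locus_subset_hyperplane by blast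
next
  fix x assume "x \<in> root_hyp (eps \<sigma> b - eps \<sigma> a) \<inter> \<Union>(root_hyp ` (\<lambda>k. eps \<sigma> k - eps \<sigma> a) ` {a<..<b})"
  then obtain k where k: "a < k" "k < b"
    "x \<in> root_hyp (eps \<sigma> b - eps \<sigma> a) \<inter> root_hyp (eps \<sigma> k - eps \<sigma> a)"
    by auto
  have "root_hyp (eps \<sigma> b - eps \<sigma> a) \<inter> root_hyp (eps \<sigma> k - eps \<sigma> a)
          \<subseteq> cut_locus_B (root_hyp (eps \<sigma> b - eps \<sigma> a))"
    by (rule root_hyp_Int_subset_cut_locus_B[where \<gamma> = "eps \<sigma> b - eps \<sigma> k" and a = 1 and c = 1
          and q = "coord_vec \<sigma> n (\<lambda>m. if m = a \<or> m = k \<or> m = b then real n + 1 else real m)"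
          and p = "coord_vec \<sigma> n (\<lambda>m. if m = b then 1 else 0)"])
      (use k ab in \<open>auto simp: eps_in_posroots_B inner_diff_right inner_add_right elim!: posroots_B_cases
         split: if_split_asm\<close>)
  then show "x \<in> cut_locus_B (root_hyp (eps \<sigma> b - eps \<sigma> a))"
    using k by blast
qed

lemma card_shards_root_hyp_diff:
  assumes ab: "1 \<le> a" "a < b" "b \<le> n"
  shows "card (shards_of (arrangement PB) (base_region PB) (root_hyp (eps \<sigma> b - eps \<sigma> a)))
           = 2 ^ (b - a - 1)"
proof -
  let ?H = "root_hyp (eps \<sigma> b - eps \<sigma> a)"
  let ?S = "?H - \<Union>(root_hyp ` (\<lambda>k. eps \<sigma> k - eps \<sigma> a) ` {a<..<b})"
  let ?cls = "\<lambda>x. restrict (\<lambda>k. x $ \<sigma> a < x $ \<sigma> k) {a<..<b}"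
  have "card (shards_of (arrangement PB) (base_region PB) ?H) = card (?cls ` ?S)"
    by (rule card_shards_of_sign_classes[OF cut_locus_B_root_hyp_diff[OF ab]])
      (auto simp: restrict_eq_restrict_iff inner_diff_left)
  also have "?cls ` ?S = Pi\<^sub>E {a<..<b} (\<lambda>_. UNIV)"
  proof
    show "?cls ` ?S \<subseteq> Pi\<^sub>E {a<..<b} (\<lambda>_. UNIV)"
      by auto
    show "Pi\<^sub>E {a<..<b} (\<lambda>_. UNIV) \<subseteq> ?cls ` ?S"
    proof
      fix s assume s: "s \<in> Pi\<^sub>E {a<..<b} (\<lambda>_. UNIV :: bool set)"
      define x where "x = coord_vec \<sigma> n (\<lambda>m. if a < m \<and> m < b then if s m then 1 else -1 else 0)"
      have "x \<in> ?S"
        using ab by (auto simp: x_def split: if_split_asm)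
      moreover have "?cls x = s"
        unfolding restrict_eq_iff_PiE[OF s] using ab by (auto simp: x_def)
      ultimately show "s \<in> ?cls ` ?S"
        by blast
    qed
  qed
  also have "card (Pi\<^sub>E {a<..<b} (\<lambda>_. UNIV :: bool set)) = 2 ^ (b - a - 1)"
    by (simp add: card_PiE card_UNIV_bool)
  finally show ?thesis .
qed

definition cutting_roots_sum :: "nat \<Rightarrow> nat \<Rightarrow> (real^'n) set" where
  "cutting_roots_sum u v = insert (eps \<sigma> u) ((\<lambda>k. eps \<sigma> v - eps \<sigma> k) ` ({1..<u} \<union> {u<..<v})
                              \<union> (\<lambda>k. eps \<sigma> u - eps \<sigma> k) ` {1..<u})"

lemma cut_locus_B_root_hyp_sum_subset:
  assumes uv: "1 \<le> u" "u < v" "v \<le> n"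
  shows "cut_locus_B (root_hyp (eps \<sigma> v + eps \<sigma> u)) \<subseteq> \<Union>(root_hyp ` cutting_roots_sum u v)"
    (is "cut_locus_B ?H \<subseteq> \<Union>(root_hyp ` ?W)")
proof -
  define p where "p = coord_vec \<sigma> n (\<lambda>m. if m = u then - real v else if m = v then real v else real m)"
  have W: "root_hyp w \<subseteq> \<Union>(root_hyp ` ?W)" if "w \<in> ?W" for w
    using that by blast
  have "0 < p \<bullet> \<gamma> \<or> ?H \<inter> root_hyp \<gamma> \<subseteq> \<Union>(root_hyp ` ?W)"
    if "\<gamma> \<in> PB" "root_hyp \<gamma> \<noteq> ?H" for \<gamma>
    using that(1)
  proof (cases rule: posroots_B_cases)
    case (diff i j)
    show ?thesis
    proof (cases "j = u")
      case True
      then have "?H \<inter> root_hyp \<gamma> \<subseteq> root_hyp (eps \<sigma> u - eps \<sigma> i)" "eps \<sigma> u - eps \<sigma> i \<in> ?W"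
        using diff by (auto simp: cutting_roots_sum_def)
      then show ?thesis
        using W by blast
    qed (use diff uv in \<open>auto simp: p_def inner_diff_right\<close>)
  next
    case (sum i j)
    have "\<not> (i = u \<and> j = v)"
      using sum that(2) by auto
    then consider "i = u" "j < v" | "j = u" | "i \<noteq> u" "j \<noteq> u" | "v < j"
      by (cases "i = u"; cases "j = u") (auto simp: linorder_neq_iff)
    then show ?thesis
    proof cases
      case 1
      then have "?H \<inter> root_hyp \<gamma> \<subseteq> root_hyp (eps \<sigma> v - eps \<sigma> j)" "eps \<sigma> v - eps \<sigma> j \<in> ?W"
        using sum by (auto simp: cutting_roots_sum_def)
      then show ?thesis
        using W by blast
    next
      case 2
      then have "?H \<inter> root_hyp \<gamma> \<subseteq> root_hyp (eps \<sigma> v - eps \<sigma> i)" "eps \<sigma> v - eps \<sigma> i \<in> ?W"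
        using sum by (auto simp: cutting_roots_sum_def)
      then show ?thesis
        using W by blast
    qed (use sum uv in \<open>auto simp: p_def inner_add_right\<close>)
  next
    case (eps i)
    show ?thesis
    proof (cases "i = u")
      case True
      then show ?thesis
        using W[of "eps \<sigma> u"] eps by (auto simp: cutting_roots_sum_def)
    qed (use eps uv in \<open>auto simp: p_def\<close>)
  qed
  then show ?thesis
    using uv by (intro cut_locus_B_subset[OF eps_in_posroots_B(3)]) (auto simp: p_def inner_add_right)
qed

lemma root_hyp_sum_Int_subset_cut_locus_B:
  assumes uv: "1 \<le> u" "u < v" "v \<le> n" and w: "w \<in> cutting_roots_sum u v"
  shows "root_hyp (eps \<sigma> v + eps \<sigma> u) \<inter> root_hyp w \<subseteq> cut_locus_B (root_hyp (eps \<sigma> v + eps \<sigma> u))"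
    (is "?H \<inter> _ \<subseteq> _")
proof -
  from w consider "w = eps \<sigma> u" | k where "k \<in> {1..<u} \<union> {u<..<v}" "w = eps \<sigma> v - eps \<sigma> k"
    | k where "k \<in> {1..<u}" "w = eps \<sigma> u - eps \<sigma> k"
    unfolding cutting_roots_sum_def by blast
  then show ?thesis
  proof cases
    case 1
    have "?H \<inter> root_hyp (eps \<sigma> u) \<subseteq> cut_locus_B ?H"
      by (rule root_hyp_Int_subset_cut_locus_B[where \<gamma> = "eps \<sigma> v - eps \<sigma> u" and a = 2 and c = 1
            and q = "coord_vec \<sigma> n (\<lambda>m. if m = u \<or> m = v then 0 else real m)"
            and p = "coord_vec \<sigma> n (\<lambda>m. if m = v then 1 else 0)"])
        (use uv in \<open>auto simp: eps_in_posroots_B inner_diff_right inner_add_right scaleR_2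
           elim!: posroots_B_cases split: if_split_asm\<close>)
    then show ?thesis
      using 1(1) by simp
  next
    case (2 k)
    have "?H \<inter> root_hyp (eps \<sigma> v - eps \<sigma> k) \<subseteq> cut_locus_B ?H"
      by (rule root_hyp_Int_subset_cut_locus_B[where \<gamma> = "eps \<sigma> k + eps \<sigma> u" and a = 1 and c = 1
            and q = "coord_vec \<sigma> n (\<lambda>m. if m = k \<or> m = v then real n + 1 else if m = u then - (real n + 1) else real m)"
            and p = "coord_vec \<sigma> n (\<lambda>m. if m = u then 1 else 0)"])
        (use uv 2(1) in \<open>auto simp: eps_in_posroots_B inner_diff_right inner_add_right
           elim!: posroots_B_cases split: if_split_asm\<close>)
    then show ?thesis
      using 2(2) by simp
  next
    case (3 k)
    have "?H \<inter> root_hyp (eps \<sigma> u - eps \<sigma> k) \<subseteq> cut_locus_B ?H"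
      by (rule root_hyp_Int_subset_cut_locus_B[where \<gamma> = "eps \<sigma> v + eps \<sigma> k" and a = 1 and c = 1
            and q = "coord_vec \<sigma> n (\<lambda>m. if m = k \<or> m = u then real n + 1 else if m = v then - (real n + 1) else real m)"
            and p = "coord_vec \<sigma> n (\<lambda>m. if m = v then 1 else 0)"])
        (use uv 3(1) in \<open>auto simp: eps_in_posroots_B inner_diff_right inner_add_right
           elim!: posroots_B_cases split: if_split_asm\<close>)
    then show ?thesis
      using 3(2) by simp
  qed
qed

lemma cut_locus_B_root_hyp_sum:
  assumes uv: "1 \<le> u" "u < v" "v \<le> n"
  shows "cut_locus_B (root_hyp (eps \<sigma> v + eps \<sigma> u))
           = root_hyp (eps \<sigma> v + eps \<sigma> u) \<inter> \<Union>(root_hyp ` cutting_roots_sum u v)"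
  using cut_locus_B_root_hyp_sum_subset[OF uv] root_hyp_sum_Int_subset_cut_locus_B[OF uv]
    cut_locus_subset_hyperplane by blast

lemma sign_classes_root_hyp_sum:
  assumes uv: "1 \<le> u" "u < v" "v \<le> n"
  shows "(\<lambda>x. (0 < x $ \<sigma> u, restrict (\<lambda>k. x $ \<sigma> k < x $ \<sigma> v) {u<..<v},
              restrict (\<lambda>k. (x $ \<sigma> k < x $ \<sigma> u, x $ \<sigma> k < x $ \<sigma> v)) {1..<u}))
           ` (root_hyp (eps \<sigma> v + eps \<sigma> u) - \<Union>(root_hyp ` cutting_roots_sum u v))
         = (SIGMA e:UNIV. Pi\<^sub>E {u<..<v} (\<lambda>_. UNIV) \<times> Pi\<^sub>E {1..<u} (\<lambda>_. sign_pairs e))"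
    (is "?cls ` ?S = ?T")
proof
  show "?cls ` ?S \<subseteq> ?T"
    by (auto simp: cutting_roots_sum_def sign_pairs_def)
  show "?T \<subseteq> ?cls ` ?S"
  proof clarify
    fix e s t
    assume s: "s \<in> Pi\<^sub>E {u<..<v} (\<lambda>_. UNIV :: bool set)"
      and t: "t \<in> Pi\<^sub>E {1..<u} (\<lambda>_. sign_pairs e)"
    define c :: real where "c = (if e then 1 else -1)"
    define x where "x = coord_vec \<sigma> n (\<lambda>m.
      if m = u then c else if m = v then - c
      else if u < m \<and> m < v then (if s m then - c - 1 else - c + 1)
      else if m < u then (if fst (t m) \<and> snd (t m) then -2 else if \<not> fst (t m) \<and> \<not> snd (t m) then 2 else 0)
      else 0)"
    have t_pair: "t k \<in> sign_pairs e" if "k \<in> {1..<u}" for k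
      using t that by auto
    have "x \<in> ?S"
      using uv t_pair by (auto simp: cutting_roots_sum_def x_def c_def sign_pairs_def split: if_split_asm)
    moreover have "(0 < x $ \<sigma> u) = e"
      using uv by (simp add: x_def c_def)
    moreover have "restrict (\<lambda>k. x $ \<sigma> k < x $ \<sigma> v) {u<..<v} = s"
      unfolding restrict_eq_iff_PiE[OF s] using uv by (auto simp: x_def c_def)
    moreover have "(x $ \<sigma> k < x $ \<sigma> u, x $ \<sigma> k < x $ \<sigma> v) = t k" if k: "k \<in> {1..<u}" for k
      using t_pair[OF k] uv k by (cases e) (auto simp: x_def c_def sign_pairs_def)
    then have "restrict (\<lambda>k. (x $ \<sigma> k < x $ \<sigma> u, x $ \<sigma> k < x $ \<sigma> v)) {1..<u} = t"
      unfolding restrict_eq_iff_PiE[OF t] by blast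
    ultimately show "(e, s, t) \<in> ?cls ` ?S"
      by blast
  qed
qed

lemma card_shards_root_hyp_sum:
  assumes uv: "1 \<le> u" "u < v" "v \<le> n"
  shows "card (shards_of (arrangement PB) (base_region PB) (root_hyp (eps \<sigma> v + eps \<sigma> u)))
           = 2 ^ (v - u) * 3 ^ (u - 1)"
proof -
  let ?W = "cutting_roots_sum u v"
  let ?cls = "\<lambda>x. (0 < x $ \<sigma> u, restrict (\<lambda>k. x $ \<sigma> k < x $ \<sigma> v) {u<..<v},
                    restrict (\<lambda>k. (x $ \<sigma> k < x $ \<sigma> u, x $ \<sigma> k < x $ \<sigma> v)) {1..<u})"
  have "card (shards_of (arrangement PB) (base_region PB) (root_hyp (eps \<sigma> v + eps \<sigma> u)))
          = card (?cls ` (root_hyp (eps \<sigma> v + eps \<sigma> u) - \<Union>(root_hyp ` ?W)))"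
  proof (rule card_shards_of_sign_classes[OF cut_locus_B_root_hyp_sum[OF uv]])
    fix x y :: "real^'n"
    have "(\<forall>w\<in>?W. (0 < w \<bullet> x) = (0 < w \<bullet> y)) \<longleftrightarrow> (0 < x $ \<sigma> u) = (0 < y $ \<sigma> u)
      \<and> (\<forall>k\<in>{1..<u} \<union> {u<..<v}. (x $ \<sigma> k < x $ \<sigma> v) = (y $ \<sigma> k < y $ \<sigma> v))
      \<and> (\<forall>k\<in>{1..<u}. (x $ \<sigma> k < x $ \<sigma> u) = (y $ \<sigma> k < y $ \<sigma> u))"
      by (simp add: cutting_roots_sum_def inner_diff_left ball_Un)
    then show "?cls x = ?cls y \<longleftrightarrow> (\<forall>w\<in>?W. (0 < w \<bullet> x) = (0 < w \<bullet> y))"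
      by (auto simp: restrict_eq_restrict_iff ball_Un)
  qed (simp add: cutting_roots_sum_def)
  also have "\<dots> = card (SIGMA e:UNIV. Pi\<^sub>E {u<..<v} (\<lambda>_. UNIV :: bool set) \<times> Pi\<^sub>E {1..<u} (\<lambda>_. sign_pairs e))"
    by (simp only: sign_classes_root_hyp_sum[OF uv])
  also have "\<dots> = (\<Sum>e\<in>UNIV. card (Pi\<^sub>E {u<..<v} (\<lambda>_. UNIV :: bool set)) * card (Pi\<^sub>E {1..<u} (\<lambda>_. sign_pairs e)))"
    by (subst card_SigmaI) (simp_all add: card_cartesian_product finite_PiE finite_sign_pairs finite_cartesian_product)
  also have "\<dots> = 2 * (2 ^ (v - u - 1) * 3 ^ (u - 1))"
    by (simp add: card_PiE card_UNIV_bool card_sign_pairs UNIV_bool mult_2 numeral_2_eq_2)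
  also have "\<dots> = 2 ^ (v - u) * 3 ^ (u - 1)"
    using uv by (simp add: power_eq_if)
  finally show ?thesis .
qed

lemma hypB_eq_root_hyp:
  "hypB \<sigma> 0 j = root_hyp (eps \<sigma> j)"
  "1 \<le> i \<Longrightarrow> hypB \<sigma> i j = root_hyp (eps \<sigma> j - eps \<sigma> i)"
  "hypB_neg \<sigma> i j = root_hyp (eps \<sigma> j + eps \<sigma> i)"
  by (auto simp: hypB_def hypB_neg_def)

lemma card_shards_hypB:
  assumes "i < j" "j \<le> n"
  shows "card (shards_of (arrangement PB) (base_region PB) (hypB \<sigma> i j)) = 2 ^ (j - i - 1)"
  using assms card_shards_root_hyp_eps[of j] card_shards_root_hyp_diff[of i j]
  by (cases "i = 0") (simp_all add: hypB_eq_root_hyp)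

lemma card_shards_hypB_neg:
  assumes "1 \<le> i" "i < j" "j \<le> n"
  shows "card (shards_of (arrangement PB) (base_region PB) (hypB_neg \<sigma> i j)) = 2 ^ (j - i) * 3 ^ (i - 1)"
  using assms by (simp add: hypB_eq_root_hyp card_shards_root_hyp_sum)

lemma arrangement_posroots_B:
  "arrangement PB = (\<lambda>(i, j). hypB \<sigma> i j) ` {(i, j). i < j \<and> j \<le> n}
                      \<union> (\<lambda>(i, j). hypB_neg \<sigma> i j) ` {(i, j). 1 \<le> i \<and> i < j \<and> j \<le> n}"
    (is "_ = ?A0 \<union> ?A1")
proof (intro equalityI subsetI)
  fix H assume "H \<in> arrangement PB"
  then obtain \<gamma> where \<gamma>: "\<gamma> \<in> PB" "H = root_hyp \<gamma>"
    by (auto simp: arrangement_def)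
  from \<gamma>(1) show "H \<in> ?A0 \<union> ?A1"
  proof (cases rule: posroots_B_cases)
    case (diff i j)
    then have "H = hypB \<sigma> i j"
      using \<gamma>(2) by (simp add: hypB_eq_root_hyp)
    then show ?thesis
      using diff by (auto intro!: rev_image_eqI[of "(i, j)"])
  next
    case (sum i j)
    then have "H = hypB_neg \<sigma> i j"
      using \<gamma>(2) by (simp add: hypB_eq_root_hyp)
    then show ?thesis
      using sum by (auto intro!: rev_image_eqI[of "(i, j)"])
  next
    case (eps j)
    then have "H = hypB \<sigma> 0 j"
      using \<gamma>(2) by (simp add: hypB_eq_root_hyp)
    then show ?thesis
      using eps by (auto intro!: rev_image_eqI[of "(0, j)"])
  qed
next
  fix H assume "H \<in> ?A0 \<union> ?A1"
  then obtain i j where "i < j" "j \<le> n" and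
    "H = hypB \<sigma> i j \<or> (1 \<le> i \<and> H = hypB_neg \<sigma> i j)"
    by auto
  then show "H \<in> arrangement PB"
    unfolding arrangement_def
    by (cases "i = 0") (auto simp: hypB_eq_root_hyp intro!: imageI eps_in_posroots_B)
qed

definition unit_vec :: "nat \<Rightarrow> real^'n" where
  "unit_vec m = coord_vec \<sigma> n (\<lambda>l. if l = m then 1 else 0)"

lemma unit_vec_notin_hypB:
  assumes "i < j" "j \<le> n"
  shows "{m\<in>{1..n}. unit_vec m \<notin> hypB \<sigma> i j} = {i, j} - {0}"
  using assms by (auto simp: unit_vec_def hypB_def)

lemma unit_vec_notin_hypB_neg:
  assumes "1 \<le> i" "i < j" "j \<le> n"
  shows "{m\<in>{1..n}. unit_vec m \<notin> hypB_neg \<sigma> i j} = {i, j}"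
  using assms by (auto simp: unit_vec_def hypB_neg_def)

lemma index_pair_eq:
  fixes i j i' j' :: nat
  assumes "{i, j} - {0} = {i', j'} - {0}" "i < j" "i' < j'"
  shows "i = i' \<and> j = j'"
proof -
  have "j \<in> {i', j'}" "j' \<in> {i, j}" "0 < i \<Longrightarrow> i \<in> {i', j'}" "0 < i' \<Longrightarrow> i' \<in> {i, j}"
    using assms by blast+
  then show ?thesis
    using assms(2,3) by auto
qed

lemma inj_on_hypB: "inj_on (\<lambda>(i, j). hypB \<sigma> i j) {(i, j). i < j \<and> j \<le> n}"
proof (rule inj_onI, clarify)
  fix i j i' j' assume ij: "i < j" "j \<le> n" "i' < j'" "j' \<le> n" and "hypB \<sigma> i j = hypB \<sigma> i' j'"
  then have "{m\<in>{1..n}. unit_vec m \<notin> hypB \<sigma> i j} = {m\<in>{1..n}. unit_vec m \<notin> hypB \<sigma> i' j'}"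
    by simp
  then have "{i, j} - {0} = {i', j'} - {0}"
    by (simp only: unit_vec_notin_hypB ij)
  then show "i = i' \<and> j = j'"
    using index_pair_eq ij by blast
qed

lemma inj_on_hypB_neg: "inj_on (\<lambda>(i, j). hypB_neg \<sigma> i j) {(i, j). 1 \<le> i \<and> i < j \<and> j \<le> n}"
proof (rule inj_onI, clarify)
  fix i j i' j' assume ij: "1 \<le> i" "i < j" "j \<le> n" "1 \<le> i'" "i' < j'" "j' \<le> n"
    and "hypB_neg \<sigma> i j = hypB_neg \<sigma> i' j'"
  then have "{m\<in>{1..n}. unit_vec m \<notin> hypB_neg \<sigma> i j} = {m\<in>{1..n}. unit_vec m \<notin> hypB_neg \<sigma> i' j'}"
    by simp
  then have "{i, j} = {i', j'}"
    by (simp only: unit_vec_notin_hypB_neg ij)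
  then show "i = i' \<and> j = j'"
    using index_pair_eq[of i j i' j'] ij by simp
qed

lemma hypB_neq_hypB_neg:
  assumes "i < j" "j \<le> n" "1 \<le> i'" "i' < j'" "j' \<le> n"
  shows "hypB \<sigma> i j \<noteq> hypB_neg \<sigma> i' j'"
proof
  assume eq: "hypB \<sigma> i j = hypB_neg \<sigma> i' j'"
  then have "{m\<in>{1..n}. unit_vec m \<notin> hypB \<sigma> i j} = {m\<in>{1..n}. unit_vec m \<notin> hypB_neg \<sigma> i' j'}"
    by simp
  then have "{i, j} - {0} = {i', j'}"
    by (simp only: unit_vec_notin_hypB unit_vec_notin_hypB_neg assms)
  then have "{i, j} - {0} = {i', j'} - {0}"
    using assms(3) by auto
  then have "i = i'" "j = j'"
    using index_pair_eq assms by blast+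
  moreover have "coord_vec \<sigma> n (\<lambda>l. if l = i \<or> l = j then 1 else 0) \<in> hypB \<sigma> i j"
    "coord_vec \<sigma> n (\<lambda>l. if l = i \<or> l = j then 1 else 0) \<notin> hypB_neg \<sigma> i j"
    using assms \<open>i = i'\<close> by (auto simp: hypB_def hypB_neg_def)
  ultimately show False
    using eq by simp
qed

lemma card_all_shards_B_eq_sum:
  "card (all_shards (arrangement PB) (base_region PB))
     = (\<Sum>H\<in>arrangement PB. card (shards_of (arrangement PB) (base_region PB) H))"
proof -
  have "0 < card (shards_of (arrangement PB) (base_region PB) H)" if "H \<in> arrangement PB" for H
  proof -
    from that consider i j where "i < j" "j \<le> n" "H = hypB \<sigma> i j"
      | i j where "1 \<le> i" "i < j" "j \<le> n" "H = hypB_neg \<sigma> i j"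
      unfolding arrangement_posroots_B by blast
    then show ?thesis
      by cases (simp_all add: card_shards_hypB card_shards_hypB_neg)
  qed
  moreover have "shards_of (arrangement PB) (base_region PB) H \<inter> shards_of (arrangement PB) (base_region PB) H' = {}"
    if HH': "H \<in> arrangement PB" "H' \<in> arrangement PB" "H \<noteq> H'" for H H'
  proof -
    obtain \<beta> \<beta>' where "\<beta> \<in> PB" "\<beta>' \<in> PB" "H = root_hyp \<beta>" "H' = root_hyp \<beta>'"
      using HH'(1,2) by (auto simp: arrangement_def)
    then show ?thesis
      using shards_of_disjoint[OF finite_posroots_B zero_notin_posroots_B] HH'(3) by blast
  qed
  ultimately show ?thesis
    unfolding all_shards_def using finite_posroots_B
    by (intro card_UN_disjoint) (auto simp: arrangement_def card_gt_0_iff)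
qed

lemma card_all_shards_B:
  "card (all_shards (arrangement PB) (base_region PB))
     = (\<Sum>j\<in>{1..n}. \<Sum>i\<in>{0..<j}. (2::nat) ^ (j - i - 1))
       + (\<Sum>j\<in>{1..n}. \<Sum>i\<in>{1..<j}. (2::nat) ^ (j - i) * 3 ^ (i - 1))"
proof -
  let ?c = "\<lambda>H. card (shards_of (arrangement PB) (base_region PB) H)"
  let ?I0 = "{(i, j). i < j \<and> j \<le> n}" and ?I1 = "{(i, j). 1 \<le> i \<and> i < j \<and> j \<le> n}"
  let ?A0 = "(\<lambda>(i, j). hypB \<sigma> i j) ` ?I0" and ?A1 = "(\<lambda>(i, j). hypB_neg \<sigma> i j) ` ?I1"
  have fin: "finite ?I0" "finite ?I1"
    by (auto intro: finite_subset[of _ "{0..n} \<times> {0..n}"])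
  have "card (all_shards (arrangement PB) (base_region PB)) = (\<Sum>H\<in>?A0 \<union> ?A1. ?c H)"
    unfolding card_all_shards_B_eq_sum by (rule sum.cong[OF arrangement_posroots_B refl])
  also have "\<dots> = (\<Sum>H\<in>?A0. ?c H) + (\<Sum>H\<in>?A1. ?c H)"
    using fin hypB_neq_hypB_neg by (intro sum.union_disjoint) auto
  also have "(\<Sum>H\<in>?A0. ?c H) = (\<Sum>(i, j)\<in>?I0. (2::nat) ^ (j - i - 1))"
    unfolding sum.reindex[OF inj_on_hypB] by (intro sum.cong) (auto simp: card_shards_hypB)
  also have "(\<Sum>H\<in>?A1. ?c H) = (\<Sum>(i, j)\<in>?I1. (2::nat) ^ (j - i) * 3 ^ (i - 1))"
    unfolding sum.reindex[OF inj_on_hypB_neg] by (intro sum.cong) (auto simp: card_shards_hypB_neg)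
  also have "(\<Sum>(i, j)\<in>?I0. (2::nat) ^ (j - i - 1)) = (\<Sum>j\<in>{1..n}. \<Sum>i\<in>{0..<j}. 2 ^ (j - i - 1))"
    using sum_upper_triangle[where a = 0 and n = n and g = "\<lambda>i j. (2::nat) ^ (j - i - 1)"] by simp
  also have "(\<Sum>(i, j)\<in>?I1. (2::nat) ^ (j - i) * 3 ^ (i - 1))
               = (\<Sum>j\<in>{1..n}. \<Sum>i\<in>{1..<j}. 2 ^ (j - i) * 3 ^ (i - 1))"
    by (rule sum_upper_triangle)
  finally show ?thesis .
qed

end

theorem mainTheorem7:
  fixes \<sigma> :: "nat \<Rightarrow> 'n::finite" and n :: nat
  assumes "n = CARD('n)"
    and "bij_betw \<sigma> {1..n} UNIV"
  shows "(\<forall>i j. i < j \<and> j \<le> n \<longrightarrow>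
            card (shards_of (arrangement (posroots_B \<sigma> n)) (base_region (posroots_B \<sigma> n))
                   (hypB \<sigma> i j)) = 2 ^ (j - i - 1))
       \<and> (\<forall>i j. 1 \<le> i \<and> i < j \<and> j \<le> n \<longrightarrow>
            card (shards_of (arrangement (posroots_B \<sigma> n)) (base_region (posroots_B \<sigma> n))
                   (hypB_neg \<sigma> i j)) = 2 ^ (j - i) * 3 ^ (i - 1))
       \<and> card (all_shards (arrangement (posroots_B \<sigma> n)) (base_region (posroots_B \<sigma> n)))
           = (\<Sum>j\<in>{1..n}. \<Sum>i\<in>{0..<j}. (2::nat) ^ (j - i - 1))
             + (\<Sum>j\<in>{1..n}. \<Sum>i\<in>{1..<j}. (2::nat) ^ (j - i) * 3 ^ (i - 1))
       \<and> (\<Sum>j\<in>{1..n}. \<Sum>i\<in>{0..<j}. (2::nat) ^ (j - i - 1))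
             + (\<Sum>j\<in>{1..n}. \<Sum>i\<in>{1..<j}. (2::nat) ^ (j - i) * 3 ^ (i - 1))
           = 3 ^ n - n - 1"
  using card_shards_hypB[OF assms(2)] card_shards_hypB_neg[OF assms(2)]
    card_all_shards_B[OF assms(2)] sum_shard_counts_B
  by blast

end
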